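(* Let $G=(V,E)$ be a directed labeled graph with vertex-labeling function $l_V:V\to\mathcal{X}$ and edge-labeling function $l_E:E\to\mathcal{Z}$, where $\mathcal{X},\mathcal{Z}$ are countable sets. Let $c_l^{(t)}$ be the Weisfeiler--Lehman colorings for directed labeled graphs and $f^{(t)}$ the GNN node representations defined in the context below. Then for all $t\ge 0$, for all choices of initial representations $f^{(0)}$ consistent with $l_V$, of edge embeddings $f_E$ consistent with $l_E$, and of weight matrices $W_1^{(t)},W_2^{(t)},W_3^{(t)},W_4^{(t)}$, we have $$c_l^{(t)}(v)=c_l^{(t)}(u)\ \Longrightarrow\ f^{(t)}(v)=f^{(t)}(u)\qquad\text{for all } u,v\in V.$$
   Context: A directed edge $(u,v)\in E$ starts at $u$ and ends at $v$. Neighborhoods: $\mathcal{N}(v)=\{u\in V: (v,u)\in E \text{ or } (u,v)\in E\}$, $\mathcal{N}^I(v)=\{u:(u,v)\in E\}$, $\mathcal{N}^O(v)=\{u:(v,u)\in E\}$. For an edge label $e\in\mathcal{Z}$, let $n^I_v(e)=|\{u\in\mathcal{N}^I(v): l_E(u,v)=e\}|$ and $n^O_v(e)=|\{u\in\mathcal{N}^O(v): l_E(v,u)=e\}|$. Weisfeiler--Lehman coloring: $c_l^{(0)}(v)=l_V(v)$, and for $t\ge1$ $$c_l^{(t)}(v)=g\Big(c_l^{(t-1)}(v),\ \{\{c_l^{(t-1)}(u):u\in\mathcal{N}(v)\}\},\ \{(n^I_v(e),e): \exists (u,v)\in E \text{ with } l_E(u,v)=e\},\ \{(n^O_v(e),e):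 \exists (v,u)\in E \text{ with } l_E(v,u)=e\}\Big),$$ where $g$ is an injective hashing function and $\{\{\cdot\}\}$ denotes a multiset. GNN: $f^{(t)}(v)\in\mathbb{R}^{1\times d^{(t)}}$, with $$f^{(t)}(v)=\sigma\Big(f^{(t-1)}(v)W_1^{(t)}+\sum_{u\in\mathcal{N}(v)}f^{(t-1)}(u)W_2^{(t)}+\sum_{(u,v)\in E}f_E(u,v,l_E(u,v))W_3^{(t)}+\sum_{(v,u)\in E}f_E(v,u,l_E(v,u))W_4^{(t)}\Big),$$ where $\sigma$ is an elementwise activation function, $W_1^{(t)},W_2^{(t)}\in\mathbb{R}^{d^{(t-1)}\times d^{(t)}}$, $W_3^{(t)},W_4^{(t)}\in\mathbb{R}^{d_E\times d^{(t)}}$, and $f_E(u,v,l_E(u,v))\in\mathbb{R}^{1\times d_E}$ is an embedding of the edge $(u,v)$. $f^{(0)}$ is consistent with $l_V$ if $f^{(0)}(v)=f^{(0)}(u)\iff l_V(v)=l_V(u)$ for all $u,v\in V$. The edge embeddings $f_E$ are consistent with $l_E$ if for all vertices $v,v'$: $\sum_{(u,v)\in E}f_E(u,v,l_E(u,v))=\sum_{(u,v')\in E}f_E(u,v',l_E(u,v'))$ if and only if $\{(n^I_v(e),e):\exists(u,v)\in E, l_E(u,v)=e\}=\{(n^I_{v'}(e),e):\exists(u,v')\in E, l_E(u,v')=e\}$, and the analogous equivalence holds for sums over outgoing edges $(v,u)\in E$ and the sets built from $n^O$. *)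

theory Defs
  imports Complex_Main "HOL-Library.Multiset" "HOL-Library.Countable"
begin

text \<open>Vectors in R^{1 x d} are modelled as functions nat => real that vanish at
  indices >= d; a d x d' matrix is a function nat => nat => real of which only
  the entries with row < d and column < d' are used.\<close>

definition nbr :: "('v \<times> 'v) set \<Rightarrow> 'v \<Rightarrow> 'v set" where
  "nbr E v = {u. (v, u) \<in> E \<or> (u, v) \<in> E}"

definition nIn :: "('v \<times> 'v) set \<Rightarrow> ('v \<times> 'v \<Rightarrow> 'z) \<Rightarrow> 'v \<Rightarrow> 'z \<Rightarrow> nat" where
  "nIn E lE v e = card {u. (u, v) \<in> E \<and> lE (u, v) = e}"

definition nOut :: "('v \<times> 'v) set \<Rightarrow> ('v \<times> 'v \<Rightarrow> 'z) \<Rightarrow> 'v \<Rightarrow> 'z \<Rightarrow> nat" where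
  "nOut E lE v e = card {u. (v, u) \<in> E \<and> lE (v, u) = e}"

definition inLab :: "('v \<times> 'v) set \<Rightarrow> ('v \<times> 'v \<Rightarrow> 'z) \<Rightarrow> 'v \<Rightarrow> (nat \<times> 'z) set" where
  "inLab E lE v = {(nIn E lE v e, e) | e. \<exists>u. (u, v) \<in> E \<and> lE (u, v) = e}"

definition outLab :: "('v \<times> 'v) set \<Rightarrow> ('v \<times> 'v \<Rightarrow> 'z) \<Rightarrow> 'v \<Rightarrow> (nat \<times> 'z) set" where
  "outLab E lE v = {(nOut E lE v e, e) | e. \<exists>u. (v, u) \<in> E \<and> lE (v, u) = e}"

text \<open>WL colouring; g is the injective hash, iota an injective embedding of vertex
  labels into the colour type (so c^(0) = l_V up to renaming).\<close>
fun wl :: "('c \<times> 'c multiset \<times> (nat \<times> 'z) set \<times> (nat \<times> 'z) set \<Rightarrow> 'c) \<Rightarrow> ('x \<Rightarrow> 'c)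
     \<Rightarrow> ('v \<times> 'v) set \<Rightarrow> ('v \<Rightarrow> 'x) \<Rightarrow> ('v \<times> 'v \<Rightarrow> 'z) \<Rightarrow> nat \<Rightarrow> 'v \<Rightarrow> 'c" where
  "wl g iota E lV lE 0 v = iota (lV v)"
| "wl g iota E lV lE (Suc t) v =
     g (wl g iota E lV lE t v,
        image_mset (wl g iota E lV lE t) (mset_set (nbr E v)),
        inLab E lE v, outLab E lE v)"

definition inEmb :: "('v \<times> 'v) set \<Rightarrow> ('v \<times> 'v \<Rightarrow> 'z) \<Rightarrow> ('v \<Rightarrow> 'v \<Rightarrow> 'z \<Rightarrow> nat \<Rightarrow> real)
     \<Rightarrow> 'v \<Rightarrow> nat \<Rightarrow> real" where
  "inEmb E lE fE v = (\<lambda>k. \<Sum>u\<in>{u. (u, v) \<in> E}. fE u v (lE (u, v)) k)"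

definition outEmb :: "('v \<times> 'v) set \<Rightarrow> ('v \<times> 'v \<Rightarrow> 'z) \<Rightarrow> ('v \<Rightarrow> 'v \<Rightarrow> 'z \<Rightarrow> nat \<Rightarrow> real)
     \<Rightarrow> 'v \<Rightarrow> nat \<Rightarrow> real" where
  "outEmb E lE fE v = (\<lambda>k. \<Sum>u\<in>{u. (v, u) \<in> E}. fE v u (lE (v, u)) k)"

text \<open>GNN layers. d t = dimension d^(t), dE = edge embedding dimension,
  W1 t, ..., W4 t the weight matrices of layer t.\<close>
fun gnn :: "(real \<Rightarrow> real) \<Rightarrow> (nat \<Rightarrow> nat) \<Rightarrow> nat
     \<Rightarrow> (nat \<Rightarrow> nat \<Rightarrow> nat \<Rightarrow> real) \<Rightarrow> (nat \<Rightarrow> nat \<Rightarrow> nat \<Rightarrow> real)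
     \<Rightarrow> (nat \<Rightarrow> nat \<Rightarrow> nat \<Rightarrow> real) \<Rightarrow> (nat \<Rightarrow> nat \<Rightarrow> nat \<Rightarrow> real)
     \<Rightarrow> ('v \<Rightarrow> nat \<Rightarrow> real) \<Rightarrow> ('v \<Rightarrow> 'v \<Rightarrow> 'z \<Rightarrow> nat \<Rightarrow> real)
     \<Rightarrow> ('v \<times> 'v) set \<Rightarrow> ('v \<times> 'v \<Rightarrow> 'z) \<Rightarrow> nat \<Rightarrow> 'v \<Rightarrow> nat \<Rightarrow> real" where
  "gnn \<sigma> d dE W1 W2 W3 W4 f0 fE E lE 0 v = f0 v"
| "gnn \<sigma> d dE W1 W2 W3 W4 f0 fE E lE (Suc t) v =
     (\<lambda>j. if j < d (Suc t) then
        \<sigma> ((\<Sum>i<d t. gnn \<sigma> d dE W1 W2 W3 W4 f0 fE E lE t v i * W1 (Suc t) i j)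
          + (\<Sum>u\<in>nbr E v. \<Sum>i<d t. gnn \<sigma> d dE W1 W2 W3 W4 f0 fE E lE t u i * W2 (Suc t) i j)
          + (\<Sum>u\<in>{u. (u, v) \<in> E}. \<Sum>k<dE. fE u v (lE (u, v)) k * W3 (Suc t) k j)
          + (\<Sum>u\<in>{u. (v, u) \<in> E}. \<Sum>k<dE. fE v u (lE (v, u)) k * W4 (Suc t) k j))
      else 0)"

end

theory Submission
  imports Defs
begin

text \<open>The WL colour of v at step t+1 is an injective image of the
  data the GNN layer t+1 reads at v: the previous colour of v decides f^(t)(v) by
  induction, the multiset of neighbour colours decides every sum over neighbours of
  a function of f^(t), and the edge-label sets decide the edge-embedding sums by
  consistency of f_E. Since the layer is linear in the edge embeddings before
  sigma is applied, it only sees those embeddings through their sums.\<close>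

lemma sum_eq_if_image_mset_eq:
  fixes h :: "'b \<Rightarrow> 'd::comm_monoid_add"
  assumes factors: "\<forall>u\<in>V. \<forall>v\<in>V. c v = c u \<longrightarrow> f v = f u"
    and "A \<subseteq> V" and "B \<subseteq> V"
    and colours_eq: "image_mset c (mset_set A) = image_mset c (mset_set B)"
  shows "(\<Sum>w\<in>A. h (f w)) = (\<Sum>w\<in>B. h (f w))"
proof -
  define F where "F x = f (SOME w. w \<in> V \<and> c w = x)" for x
  have f_eq_F: "f w = F (c w)" if "w \<in> V" for w
  proof -
    from that have "\<exists>w'. w' \<in> V \<and> c w' = c w" by blast
    then have "(SOME w'. w' \<in> V \<and> c w' = c w) \<in> V \<and> c (SOME w'. w' \<in> V \<and> c w' = c w) = c w"
      by (rule someI_ex)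
    with that factors show ?thesis unfolding F_def by metis
  qed
  have "(\<Sum>w\<in>C. h (f w)) = sum_mset (image_mset (h \<circ> F) (image_mset c (mset_set C)))"
    if "C \<subseteq> V" for C
  proof -
    have "(\<Sum>w\<in>C. h (f w)) = sum (h \<circ> F \<circ> c) C"
      using that f_eq_F by (intro sum.cong) auto
    also have "\<dots> = sum_mset (image_mset (h \<circ> F \<circ> c) (mset_set C))"
      by (rule sum_unfold_sum_mset)
    finally show ?thesis
      by (simp only: image_mset.compositionality)
  qed
  with \<open>A \<subseteq> V\<close> \<open>B \<subseteq> V\<close> colours_eq show ?thesis by simp
qed

lemma sum_in_edges_eq_inEmb:
  "(\<Sum>u\<in>{u. (u, v) \<in> E}. \<Sum>k<n. fE u v (lE (u, v)) k * W k j)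
     = (\<Sum>k<n. inEmb E lE fE v k * W k j)"
  unfolding inEmb_def by (simp add: sum.swap[of _ "{..<n}"] sum_distrib_right)

lemma sum_out_edges_eq_outEmb:
  "(\<Sum>u\<in>{u. (v, u) \<in> E}. \<Sum>k<n. fE v u (lE (v, u)) k * W k j)
     = (\<Sum>k<n. outEmb E lE fE v k * W k j)"
  unfolding outEmb_def by (simp add: sum.swap[of _ "{..<n}"] sum_distrib_right)

lemma gnn_Suc_eqI:
  assumes "gnn \<sigma> d dE W1 W2 W3 W4 f0 fE E lE t v = gnn \<sigma> d dE W1 W2 W3 W4 f0 fE E lE t u"
    and "\<And>j. (\<Sum>w\<in>nbr E v. \<Sum>i<d t. gnn \<sigma> d dE W1 W2 W3 W4 f0 fE E lE t w i * W2 (Suc t) i j)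
            = (\<Sum>w\<in>nbr E u. \<Sum>i<d t. gnn \<sigma> d dE W1 W2 W3 W4 f0 fE E lE t w i * W2 (Suc t) i j)"
    and "inEmb E lE fE v = inEmb E lE fE u"
    and "outEmb E lE fE v = outEmb E lE fE u"
  shows "gnn \<sigma> d dE W1 W2 W3 W4 f0 fE E lE (Suc t) v = gnn \<sigma> d dE W1 W2 W3 W4 f0 fE E lE (Suc t) u"
  unfolding gnn.simps sum_in_edges_eq_inEmb sum_out_edges_eq_outEmb assms ..

lemma nbr_subset: "E \<subseteq> V \<times> V \<Longrightarrow> nbr E v \<subseteq> V"
  unfolding nbr_def by auto

theorem theorem1:
  fixes V :: "'v set" and E :: "('v \<times> 'v) set"
    and lV :: "'v \<Rightarrow> 'x::countable" and lE :: "'v \<times> 'v \<Rightarrow> 'z::countable"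
    and g :: "'c \<times> 'c multiset \<times> (nat \<times> 'z) set \<times> (nat \<times> 'z) set \<Rightarrow> 'c"
    and iota :: "'x \<Rightarrow> 'c"
    and \<sigma> :: "real \<Rightarrow> real" and d :: "nat \<Rightarrow> nat" and dE :: nat
    and W1 W2 W3 W4 :: "nat \<Rightarrow> nat \<Rightarrow> nat \<Rightarrow> real"
    and f0 :: "'v \<Rightarrow> nat \<Rightarrow> real" and fE :: "'v \<Rightarrow> 'v \<Rightarrow> 'z \<Rightarrow> nat \<Rightarrow> real"
  assumes finV: "finite V" and EV: "E \<subseteq> V \<times> V"
    and inj_g: "inj g" and inj_iota: "inj iota"
    and f0_dim: "\<And>v k. d 0 \<le> k \<Longrightarrow> f0 v k = 0"
    and fE_dim: "\<And>u v e k. dE \<le> k \<Longrightarrow> fE u v e k = 0"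
    and f0_cons: "\<forall>u\<in>V. \<forall>v\<in>V. f0 v = f0 u \<longleftrightarrow> lV v = lV u"
    and fE_cons_in: "\<forall>v\<in>V. \<forall>v'\<in>V. inEmb E lE fE v = inEmb E lE fE v' \<longleftrightarrow> inLab E lE v = inLab E lE v'"
    and fE_cons_out: "\<forall>v\<in>V. \<forall>v'\<in>V. outEmb E lE fE v = outEmb E lE fE v' \<longleftrightarrow> outLab E lE v = outLab E lE v'"
  shows "\<forall>t. \<forall>u\<in>V. \<forall>v\<in>V. wl g iota E lV lE t v = wl g iota E lV lE t u \<longrightarrow>
           gnn \<sigma> d dE W1 W2 W3 W4 f0 fE E lE t v = gnn \<sigma> d dE W1 W2 W3 W4 f0 fE E lE t u"
proof
  fix t
  show "\<forall>u\<in>V. \<forall>v\<in>V. wl g iota E lV lE t v = wl g iota E lV lE t u \<longrightarrow>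
          gnn \<sigma> d dE W1 W2 W3 W4 f0 fE E lE t v = gnn \<sigma> d dE W1 W2 W3 W4 f0 fE E lE t u"
  proof (induction t)
    case 0
    show ?case using f0_cons inj_iota by (auto dest: injD)
  next
    case (Suc t)
    let ?f = "gnn \<sigma> d dE W1 W2 W3 W4 f0 fE E lE t"
    show ?case
    proof (intro ballI impI)
      fix u v assume "u \<in> V" "v \<in> V"
        and "wl g iota E lV lE (Suc t) v = wl g iota E lV lE (Suc t) u"
      with inj_g have colour: "wl g iota E lV lE t v = wl g iota E lV lE t u"
        and nbr_colours: "image_mset (wl g iota E lV lE t) (mset_set (nbr E v))
                        = image_mset (wl g iota E lV lE t) (mset_set (nbr E u))"
        and "inLab E lE v = inLab E lE u" "outLab E lE v = outLab E lE u"
        by (auto dest: injD)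
      with \<open>u \<in> V\<close> \<open>v \<in> V\<close> fE_cons_in fE_cons_out
      have "inEmb E lE fE v = inEmb E lE fE u" "outEmb E lE fE v = outEmb E lE fE u"
        by blast+
      moreover have "(\<Sum>w\<in>nbr E v. \<Sum>i<d t. ?f w i * W2 (Suc t) i j)
                   = (\<Sum>w\<in>nbr E u. \<Sum>i<d t. ?f w i * W2 (Suc t) i j)" for j
        using sum_eq_if_image_mset_eq[OF Suc.IH nbr_subset[OF EV] nbr_subset[OF EV] nbr_colours,
            where h = "\<lambda>x. \<Sum>i<d t. x i * W2 (Suc t) i j"] .
      moreover have "?f v = ?f u" using Suc.IH colour \<open>u \<in> V\<close> \<open>v \<in> V\<close> by blast
      ultimately show "gnn \<sigma> d dE W1 W2 W3 W4 f0 fE E lE (Suc t) v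
                     = gnn \<sigma> d dE W1 W2 W3 W4 f0 fE E lE (Suc t) u"
        by (intro gnn_Suc_eqI)
    qed
  qed
qed

end
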